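(* Let $n\ge2$ be an integer. (1) For $2\le k\le n$, let $x_1^{(n-1,k-1)}$ denote the smallest real root of $x\mapsto K_{k-1}^{(n-1)}(x)$. Then $K_k^{(n)}(x)\ge K_k^{(n)}(x+1)$ for all real $x$ with $0\le x\le x_1^{(n-1,k-1)}$. (2) For all $k\in[0:n]$ and all integers $x\in[0:n]$, \[ \left|K_k^{(n)}(x)\right|<2^{\frac n2\left(1+H\left(\frac kn\right)-H\left(\frac xn\right)+\frac1n\log_2(n+1)\right)}, \] where $H(p)=-p\log_2p-(1-p)\log_2(1-p)$ is the binary entropy function (with $H(0)=H(1)=0$).
   Context: For integers $n\ge1$, $k\in[0:n]$ and real $x$, the Krawtchouk polynomial is $K_k^{(n)}(x):=\sum_{j=0}^{k}(-1)^{j}\binom{x}{j}\binom{n-x}{k-j}$, with generalized binomial coefficients $\binom{x}{j}=\frac{x(x-1)\cdots(x-j+1)}{j!}$. For $k\ge1$, $x\mapsto K_k^{(n)}(x)$ has $k$ distinct real roots. *)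

theory Defs
  imports "HOL-Analysis.Analysis"
begin

definition krawtchouk :: "nat \<Rightarrow> nat \<Rightarrow> real \<Rightarrow> real" where
  "krawtchouk n k x = (\<Sum>j\<le>k. (-1)^j * (x gchoose j) * ((real n - x) gchoose (k - j)))"

text \<open>Smallest real root of x \<mapsto> K_k^{(n)}(x) (k \<ge> 1, where the root set is finite and nonempty).\<close>
definition kraw_smallest_root :: "nat \<Rightarrow> nat \<Rightarrow> real" where
  "kraw_smallest_root n k = Min {x. krawtchouk n k x = 0}"

definition binary_entropy :: "real \<Rightarrow> real" where
  "binary_entropy p = (if p = 0 \<or> p = 1 then 0
     else - p * log 2 p - (1 - p) * log 2 (1 - p))"

end

theory Submission
  imports Defs "HOL-Computational_Algebra.Polynomial"
begin

text \<open>
  (1) Pascal's rule, applied to either binomial coefficient in the definition, gives the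
  forward difference \<open>K_k^(n)(x + 1) - K_k^(n)(x) = -2 K_(k-1)^(n-1)(x)\<close>; and \<open>K_(k-1)^(n-1)\<close>
  is a polynomial that is positive at 0, hence nonnegative up to its smallest root.

  (2) From the generating function \<open>\<Sum>_k K_k^(n)(y) z^k = (1 - z)^y (1 + z)^(n-y)\<close> one gets the
  orthogonality relation \<open>\<Sum>_y C(n,y) K_k(y)^2 = 2^n C(n,k)\<close>. Keeping only the terms \<open>y = x\<close>
  and \<open>y \<in> {0, n}\<close> gives \<open>C(n,x) K_k(x)^2 < 2^n C(n,k)\<close>. The bound follows from the entropy
  estimates \<open>C(n,k) \<le> 2^(n H(k/n)) \<le> (n + 1) C(n,k)\<close>, which compare \<open>C(n,k) k^k (n-k)^(n-k)\<close>
  with the sum \<open>n^n = \<Sum>_j C(n,j) k^j (n-k)^(n-j)\<close>, of which it is a term and the largest one.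
\<close>

section \<open>Monotonicity below the smallest root\<close>

lemma krawtchouk_at_0: "krawtchouk n k 0 = real (n choose k)"
proof -
  have "krawtchouk n k 0 = (\<Sum>j\<le>k. if j = 0 then real (n choose k) else 0)"
    unfolding krawtchouk_def
    by (intro sum.cong refl) (auto simp: gbinomial_0_left binomial_gbinomial[symmetric])
  then show ?thesis
    by simp
qed

lemma krawtchouk_poly: "\<exists>p. \<forall>x. krawtchouk n k x = poly p x"
proof -
  define B :: "nat \<Rightarrow> real poly" where "B j = smult (1 / fact j) (\<Prod>i<j. [:- of_nat i, 1:])" for j
  have B: "x gchoose j = poly (B j) x" for x :: real and j
    by (simp add: B_def gbinomial_prod_rev poly_prod atLeast0LessThan)
  define p where "p = (\<Sum>j\<le>k. smult ((-1) ^ j) (B j * pcompose (B (k - j)) [:real n, -1:]))"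
  have "krawtchouk n k x = poly p x" for x
    unfolding p_def krawtchouk_def by (simp add: poly_sum poly_pcompose B mult.assoc)
  then show ?thesis
    by blast
qed

lemma krawtchouk_Suc_Suc:
  "krawtchouk (Suc n) (Suc m) x = krawtchouk n (Suc m) x + krawtchouk n m x"
proof -
  have "(-1) ^ j * (x gchoose j) * ((real (Suc n) - x) gchoose (Suc m - j))
      = (-1) ^ j * (x gchoose j) * ((real n - x) gchoose (Suc m - j))
        + (-1) ^ j * (x gchoose j) * ((real n - x) gchoose (m - j))"
    if "j \<le> m" for j
  proof -
    have "real (Suc n) - x = (real n - x) + 1" "Suc m - j = Suc (m - j)"
      using that by auto
    then show ?thesis
      by (simp only: gbinomial_Suc_Suc) (simp add: algebra_simps)
  qed
  then show ?thesis
    unfolding krawtchouk_def sum.atMost_Suc by (simp add: sum.distrib)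
qed

lemma krawtchouk_Suc_Suc_shift:
  "krawtchouk (Suc n) (Suc m) (x + 1) = krawtchouk n (Suc m) x - krawtchouk n m x"
proof -
  have "(-1) ^ Suc j * ((x + 1) gchoose Suc j) * ((real n - x) gchoose (Suc m - Suc j))
      = (-1) ^ Suc j * (x gchoose Suc j) * ((real n - x) gchoose (Suc m - Suc j))
        - (-1) ^ j * (x gchoose j) * ((real n - x) gchoose (m - j))" for j
    by (simp only: gbinomial_Suc_Suc) (simp add: algebra_simps)
  moreover have "real (Suc n) - (x + 1) = real n - x"
    by simp
  ultimately show ?thesis
    unfolding krawtchouk_def sum.atMost_Suc_shift[of _ m] by (simp add: sum_subtractf)
qed

text \<open>No root needs to exist: if there is none, \<open>Min {}\<close> is unspecified but the argument is unaffected.\<close>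

lemma poly_nonneg_below_least_root:
  fixes p :: "real poly"
  assumes "0 < poly p 0" "0 \<le> x" "x \<le> Min {t. poly p t = 0}"
  shows "0 \<le> poly p x"
proof (rule ccontr)
  assume "\<not> 0 \<le> poly p x"
  then have "\<exists>t\<ge>0. t \<le> x \<and> poly p t = 0"
    using assms(1,2) by (intro IVT2') (auto intro!: continuous_intros)
  then obtain t where t: "0 \<le> t" "t \<le> x" "poly p t = 0"
    by blast
  have "p \<noteq> 0"
    using assms(1) by auto
  then have "Min {t. poly p t = 0} \<le> t"
    using t(3) by (intro Min_le poly_roots_finite) auto
  moreover have "t < x"
    using t \<open>\<not> 0 \<le> poly p x\<close> by (cases "t = x") auto
  ultimately show False
    using assms(3) by simp
qed

lemma krawtchouk_nonneg_below_smallest_root: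
  assumes "k \<le> n" "0 \<le> x" "x \<le> kraw_smallest_root n k"
  shows "0 \<le> krawtchouk n k x"
proof -
  obtain p where p: "\<And>x. krawtchouk n k x = poly p x"
    using krawtchouk_poly by blast
  show ?thesis
    unfolding p using assms
    by (intro poly_nonneg_below_least_root)
      (simp_all add: kraw_smallest_root_def p[symmetric] krawtchouk_at_0)
qed

lemma krawtchouk_decreasing_below_smallest_root:
  assumes "1 \<le> k" "k \<le> n" "0 \<le> x" "x \<le> kraw_smallest_root (n - 1) (k - 1)"
  shows "krawtchouk n k (x + 1) \<le> krawtchouk n k x"
proof -
  obtain m where m: "k = Suc m"
    using assms(1) by (cases k) auto
  obtain n' where n': "n = Suc n'"
    using assms(1,2) by (cases n) auto
  have "krawtchouk n k (x + 1) = krawtchouk n k x - 2 * krawtchouk n' m x"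
    unfolding m n' krawtchouk_Suc_Suc_shift by (simp add: krawtchouk_Suc_Suc)
  moreover have "0 \<le> krawtchouk n' m x"
    using assms unfolding m n' by (intro krawtchouk_nonneg_below_smallest_root) simp_all
  ultimately show ?thesis
    by simp
qed

section \<open>Orthogonality and the entropy bound\<close>

lemma coeff_linear_poly_power:
  fixes c :: "'a::comm_semiring_1"
  shows "coeff ([:1, c:] ^ m) i = of_nat (m choose i) * c ^ i"
proof (induction m arbitrary: i)
  case 0
  then show ?case by (cases i) auto
next
  case (Suc m)
  then show ?case
    by (cases i) (simp_all add: algebra_simps)
qed

lemma krawtchouk_generating_function:
  assumes "y \<le> n"
  shows "(\<Sum>k\<le>n. krawtchouk n k (real y) * z ^ k) = (1 - z) ^ y * (1 + z) ^ (n - y)"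
proof -
  define P where "P = [:1, -1:] ^ y * [:1, 1::real:] ^ (n - y)"
  have "degree P \<le> y + (n - y)"
    unfolding P_def
    by (intro order.trans[OF degree_mult_le] add_mono order.trans[OF degree_power_le]) auto
  then have deg: "degree P \<le> n"
    using assms by simp
  have coeff: "coeff P k = krawtchouk n k (real y)" for k
  proof -
    have e: "real n - real y = real (n - y)"
      using assms by simp
    show ?thesis
      unfolding P_def coeff_mult krawtchouk_def coeff_linear_poly_power e
        binomial_gbinomial[symmetric]
      by (simp add: mult_ac)
  qed
  have "(1 - z) ^ y * (1 + z) ^ (n - y) = poly P z"
    unfolding P_def by simp
  also have "\<dots> = poly (\<Sum>k\<le>n. monom (coeff P k) k) z"
    using deg by (simp only: poly_as_sum_of_monoms')
  also have "\<dots> = (\<Sum>k\<le>n. coeff P k * z ^ k)"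
    by (simp add: poly_sum poly_monom)
  finally show ?thesis
    by (simp add: coeff)
qed

lemma krawtchouk_double_generating_function:
  "(\<Sum>k\<le>n. (\<Sum>l\<le>n. (\<Sum>y\<le>n. real (n choose y) * krawtchouk n k (real y) * krawtchouk n l (real y))
      * w ^ l) * z ^ k) = (2 + 2 * z * w) ^ n"
proof -
  have "(\<Sum>k\<le>n. (\<Sum>l\<le>n. (\<Sum>y\<le>n. real (n choose y) * krawtchouk n k (real y) * krawtchouk n l (real y))
      * w ^ l) * z ^ k)
      = (\<Sum>k\<le>n. \<Sum>y\<le>n. \<Sum>l\<le>n. real (n choose y) * krawtchouk n k (real y) * z ^ k
           * (krawtchouk n l (real y) * w ^ l))"
    unfolding sum_distrib_right
    by (rule sum.cong[OF refl], subst sum.swap) (simp add: mult_ac)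
  also have "\<dots> = (\<Sum>y\<le>n. \<Sum>k\<le>n. \<Sum>l\<le>n. real (n choose y) * krawtchouk n k (real y) * z ^ k
           * (krawtchouk n l (real y) * w ^ l))"
    by (rule sum.swap)
  also have "\<dots> = (\<Sum>y\<le>n. real (n choose y) * ((\<Sum>k\<le>n. krawtchouk n k (real y) * z ^ k)
      * (\<Sum>l\<le>n. krawtchouk n l (real y) * w ^ l)))"
    unfolding sum_product by (simp only: sum_distrib_left mult.assoc)
  also have "\<dots> = (\<Sum>y\<le>n. real (n choose y) * ((1 - z) * (1 - w)) ^ y * ((1 + z) * (1 + w)) ^ (n - y))"
  proof (intro sum.cong refl)
    fix y
    assume "y \<in> {..n}"
    then show "real (n choose y) * ((\<Sum>k\<le>n. krawtchouk n k (real y) * z ^ k)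
        * (\<Sum>l\<le>n. krawtchouk n l (real y) * w ^ l))
      = real (n choose y) * ((1 - z) * (1 - w)) ^ y * ((1 + z) * (1 + w)) ^ (n - y)"
      by (simp add: krawtchouk_generating_function) (simp add: power_mult_distrib mult_ac)
  qed
  also have "\<dots> = (2 + 2 * z * w) ^ n"
    by (subst binomial_ring[symmetric]) (simp add: algebra_simps)
  finally show ?thesis .
qed

lemma krawtchouk_orthogonality:
  assumes "k \<le> n" "l \<le> n"
  shows "(\<Sum>y\<le>n. real (n choose y) * krawtchouk n k (real y) * krawtchouk n l (real y))
    = (if k = l then 2 ^ n * real (n choose k) else 0)"
proof -
  define c where
    "c k l = (\<Sum>y\<le>n. real (n choose y) * krawtchouk n k (real y) * krawtchouk n l (real y))" for k l
  define d where "d k l = (if k = l then 2 ^ n * real (n choose k) else 0)" for k l :: nat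
  have d_sum: "(\<Sum>l\<le>n. d k l * w ^ l) = 2 ^ n * real (n choose k) * w ^ k" if "k \<le> n" for k w
    using that unfolding d_def by (simp add: if_distrib[of "\<lambda>x. x * _"] cong: if_cong)
  have "(\<Sum>k\<le>n. (\<Sum>l\<le>n. c k l * w ^ l) * z ^ k) = (\<Sum>k\<le>n. (\<Sum>l\<le>n. d k l * w ^ l) * z ^ k)"
    for z w :: real
  proof -
    have "(\<Sum>k\<le>n. (\<Sum>l\<le>n. c k l * w ^ l) * z ^ k) = (2 + 2 * z * w) ^ n"
      unfolding c_def by (rule krawtchouk_double_generating_function)
    also have "\<dots> = (\<Sum>k\<le>n. real (n choose k) * (2 * z * w) ^ k * 2 ^ (n - k))"
      by (subst binomial_ring[symmetric]) (simp add: algebra_simps)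
    also have "\<dots> = (\<Sum>k\<le>n. (\<Sum>l\<le>n. d k l * w ^ l) * z ^ k)"
    proof (intro sum.cong refl)
      fix k
      assume k: "k \<in> {..n}"
      then have "(2::real) ^ k * 2 ^ (n - k) = 2 ^ n"
        by (simp add: power_add[symmetric])
      then have "real (n choose k) * (2 * z * w) ^ k * 2 ^ (n - k) = 2 ^ n * real (n choose k) * w ^ k * z ^ k"
        by (simp add: power_mult_distrib mult_ac)
      also have "\<dots> = (\<Sum>l\<le>n. d k l * w ^ l) * z ^ k"
        using k by (simp add: d_sum)
      finally show "real (n choose k) * (2 * z * w) ^ k * 2 ^ (n - k) = (\<Sum>l\<le>n. d k l * w ^ l) * z ^ k" .
    qed
    finally show ?thesis .
  qed
  then have "(\<Sum>l\<le>n. c k l * w ^ l) = (\<Sum>l\<le>n. d k l * w ^ l)" for w :: real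
    using assms(1) polyfun_eq_coeffs[of "\<lambda>k. \<Sum>l\<le>n. c k l * w ^ l" n "\<lambda>k. \<Sum>l\<le>n. d k l * w ^ l"]
    by blast
  then have "c k l = d k l"
    using assms(2) polyfun_eq_coeffs[of "c k" n "d k"] by blast
  then show ?thesis
    by (simp add: c_def d_def)
qed

lemma krawtchouk_at_n: "krawtchouk n k (real n) = (-1) ^ k * real (n choose k)"
proof -
  have "krawtchouk n k (real n) = (\<Sum>j\<le>k. if j = k then (-1) ^ k * real (n choose k) else 0)"
    unfolding krawtchouk_def
    by (intro sum.cong refl) (auto simp: gbinomial_0_left binomial_gbinomial[symmetric])
  then show ?thesis
    by simp
qed

lemma binomial_krawtchouk_sq_less:
  assumes "1 \<le> n" "k \<le> n" "x \<le> n"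
  shows "real (n choose x) * krawtchouk n k (real x) ^ 2 < 2 ^ n * real (n choose k)"
proof -
  define f where "f y = real (n choose y) * krawtchouk n k (real y) ^ 2" for y
  \<comment> \<open>the opposite endpoint \<open>y\<close> contributes \<open>C(n,k)\<^sup>2 > 0\<close>, which makes the bound strict\<close>
  define y where "y = (if x = 0 then n else 0)"
  have y: "y \<noteq> x" "y \<le> n"
    using assms by (auto simp: y_def)
  have "f y = real (n choose k) ^ 2"
    using assms(2) by (auto simp: f_def y_def krawtchouk_at_0 krawtchouk_at_n power_mult_distrib
        power_mult[symmetric])
  then have "f y > 0"
    using assms(2) by simp
  have "f x + f y = sum f {x, y}"
    using y by simp
  also have "\<dots> \<le> sum f {..n}"
    using assms(3) y by (intro sum_mono2) (auto simp: f_def)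
  also have "\<dots> = 2 ^ n * real (n choose k)"
    using krawtchouk_orthogonality[OF assms(2) assms(2)] by (simp add: f_def power2_eq_square mult.assoc)
  finally show ?thesis
    using \<open>f y > 0\<close> by (simp add: f_def)
qed

lemma binomial_term_le_power:
  assumes "k \<le> n"
  shows "(n choose k) * k ^ k * (n - k) ^ (n - k) \<le> n ^ n"
proof -
  have "(n choose k) * k ^ k * (n - k) ^ (n - k) \<le> (\<Sum>j\<le>n. (n choose j) * k ^ j * (n - k) ^ (n - j))"
    using assms by (intro member_le_sum[where f = "\<lambda>j. (n choose j) * k ^ j * (n - k) ^ (n - j)"]) auto
  also have "\<dots> = (k + (n - k)) ^ n"
    by (simp add: binomial_ring)
  finally show ?thesis
    using assms by simp
qed

lemma binomial_term_Suc:
  assumes "j < n"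
  shows "(n choose Suc j) * x ^ Suc j * (n - x) ^ (n - Suc j) * (Suc j * (n - x))
    = (n choose j) * x ^ j * (n - x) ^ (n - j) * ((n - j) * x)"
proof -
  have "n - j = Suc (n - Suc j)"
    using assms by simp
  then have "(n choose Suc j) * x ^ Suc j * (n - x) ^ (n - Suc j) * (Suc j * (n - x))
      = ((n choose Suc j) * Suc j) * x ^ Suc j * (n - x) ^ (n - j)"
    by (simp only: power_Suc mult_ac)
  also have "(n choose Suc j) * Suc j = (n choose j) * (n - j)"
    using binomial_absorption[of j n] binomial_absorb_comp[of n j] by (simp add: mult.commute)
  finally show ?thesis
    by (simp only: power_Suc mult_ac)
qed

lemma binomial_term_le_mode:
  assumes "j \<le> n" "x \<le> n"
  shows "(n choose j) * x ^ j * (n - x) ^ (n - j) \<le> (n choose x) * x ^ x * (n - x) ^ (n - x)"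
proof -
  define u where "u j = (n choose j) * x ^ j * (n - x) ^ (n - j)" for j
  have up: "u j \<le> u (Suc j)" if "j < x" for j
  proof -
    have "u j * ((n - j) * x) = u (Suc j) * (Suc j * (n - x))"
      using that assms(2) binomial_term_Suc[of j n x] by (simp add: u_def)
    also have "\<dots> \<le> u (Suc j) * ((n - j) * x)"
      using that by (subst (2) mult.commute) (intro mult_le_mono2 mult_le_mono, auto)
    finally show ?thesis
      using that assms(2) by simp
  qed
  have down: "u (Suc j) \<le> u j" if "x \<le> j" "j < n" for j
  proof -
    have "u (Suc j) * (Suc j * (n - x)) = u j * ((n - j) * x)"
      using that binomial_term_Suc[of j n x] by (simp add: u_def)
    also have "\<dots> \<le> u j * (Suc j * (n - x))"
      using that by (subst (2) mult.commute) (intro mult_le_mono2 mult_le_mono, auto)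
    finally show ?thesis
      using that by simp
  qed
  show ?thesis
  proof (cases "j \<le> x")
    case True
    then show ?thesis
      unfolding u_def[symmetric]
      by (induction j rule: inc_induct) (auto intro: order_trans[OF up])
  next
    case False
    then have "x \<le> j"
      by simp
    then show ?thesis
      unfolding u_def[symmetric] using assms(1)
      by (induction j rule: dec_induct) (auto intro: order_trans[OF down])
  qed
qed

lemma powr_binary_entropy:
  assumes "0 < n" "k \<le> n"
  shows "2 powr (real n * binary_entropy (real k / real n))
    = real n ^ n / (real k ^ k * real (n - k) ^ (n - k))"
proof (cases "k = 0 \<or> k = n")
  case True
  then show ?thesis
    using assms by (auto simp: binary_entropy_def)
next
  case False
  then have k: "0 < k" "k < n"
    using assms by auto
  define p where "p = real k / real n"
  have p: "p \<noteq> 0" "p \<noteq> 1" "1 - p = real (n - k) / real n"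
    using k by (auto simp: p_def field_simps of_nat_diff)
  have "real n * binary_entropy p = - (real n * p) * log 2 p - (real n * (1 - p)) * log 2 (1 - p)"
    using p by (simp add: binary_entropy_def algebra_simps)
  also have "\<dots> = - real k * (log 2 (real k) - log 2 (real n))
      - real (n - k) * (log 2 (real (n - k)) - log 2 (real n))"
    unfolding p(3) using k by (simp add: p_def log_divide)
  also have "\<dots> = real n * log 2 (real n) - (real k * log 2 (real k) + real (n - k) * log 2 (real (n - k)))"
    using k by (simp add: of_nat_diff algebra_simps)
  also have "\<dots> = log 2 (real n ^ n / (real k ^ k * real (n - k) ^ (n - k)))"
    using k by (simp add: log_divide log_mult log_nat_power)
  finally show ?thesis
    using k by (simp add: p_def)
qed

lemma binomial_le_powr_entropy:
  assumes "0 < n" "k \<le> n"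
  shows "real (n choose k) \<le> 2 powr (real n * binary_entropy (real k / real n))"
proof -
  have "real ((n choose k) * (k ^ k * (n - k) ^ (n - k))) \<le> real (n ^ n)"
    using binomial_term_le_power[OF assms(2)] by (simp only: of_nat_le_iff mult.assoc)
  moreover have "0 < real k ^ k * real (n - k) ^ (n - k)"
    by (auto intro!: mult_pos_pos simp: zero_less_power_eq)
  ultimately show ?thesis
    unfolding powr_binary_entropy[OF assms] by (simp add: pos_le_divide_eq del: of_nat_diff)
qed

lemma powr_entropy_le_binomial:
  assumes "0 < n" "x \<le> n"
  shows "2 powr (real n * binary_entropy (real x / real n)) \<le> (real n + 1) * real (n choose x)"
proof -
  have "n ^ n = (\<Sum>j\<le>n. (n choose j) * x ^ j * (n - x) ^ (n - j))"
    using binomial_ring[of x "n - x" n] assms(2) by (simp add: mult_ac)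
  also have "\<dots> \<le> (\<Sum>j\<le>n. (n choose x) * x ^ x * (n - x) ^ (n - x))"
    using assms(2) by (intro sum_mono binomial_term_le_mode) auto
  finally have "real (n ^ n) \<le> real ((n + 1) * (n choose x) * (x ^ x * (n - x) ^ (n - x)))"
    by (simp only: of_nat_le_iff mult.assoc) simp
  moreover have "0 < real x ^ x * real (n - x) ^ (n - x)"
    by (auto intro!: mult_pos_pos simp: zero_less_power_eq)
  ultimately show ?thesis
    unfolding powr_binary_entropy[OF assms] by (simp add: pos_divide_le_eq algebra_simps del: of_nat_diff)
qed

lemma krawtchouk_entropy_bound:
  assumes "1 \<le> n" "k \<le> n" "x \<le> n"
  shows "\<bar>krawtchouk n k (real x)\<bar> <
    2 powr (real n / 2 * (1 + binary_entropy (real k / real n)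
      - binary_entropy (real x / real n) + 1 / real n * log 2 (real n + 1)))"
proof -
  define E where "E = real n * (1 + binary_entropy (real k / real n)
      - binary_entropy (real x / real n) + 1 / real n * log 2 (real n + 1))"
  define Hk where "Hk = 2 powr (real n * binary_entropy (real k / real n))"
  define Hx where "Hx = 2 powr (real n * binary_entropy (real x / real n))"
  have n: "0 < n"
    using assms(1) by simp
  have "2 powr E = 2 ^ n * Hk * (real n + 1) / Hx"
  proof -
    have "E = real n + real n * binary_entropy (real k / real n)
        - real n * binary_entropy (real x / real n) + log 2 (real n + 1)"
      using n by (simp add: E_def algebra_simps)
    then show ?thesis
      by (simp add: Hk_def Hx_def powr_add powr_diff powr_realpow)
  qed
  have Cx: "0 < real (n choose x)"
    using assms(3) by simp
  have "krawtchouk n k (real x) ^ 2 < 2 ^ n * real (n choose k) * (1 / real (n choose x))"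
    using binomial_krawtchouk_sq_less[OF assms] Cx by (simp add: field_simps)
  also have "\<dots> \<le> 2 ^ n * Hk * ((real n + 1) / Hx)"
  proof (intro mult_mono)
    show "real (n choose k) \<le> Hk"
      unfolding Hk_def using n assms(2) by (rule binomial_le_powr_entropy)
    show "1 / real (n choose x) \<le> (real n + 1) / Hx"
      using powr_entropy_le_binomial[OF n assms(3)] Cx by (simp add: Hx_def field_simps)
  qed (simp_all add: Hk_def)
  also have "\<dots> = 2 powr E"
    using \<open>2 powr E = _\<close> by simp
  finally have "\<bar>krawtchouk n k (real x)\<bar> < sqrt (2 powr E)"
    by (simp add: real_less_rsqrt)
  also have "\<dots> = 2 powr (E / 2)"
    by (simp add: powr_half_sqrt_powr)
  finally show ?thesis
    by (simp add: E_def)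
qed

theorem lemma2:
  fixes n :: nat
  assumes "n \<ge> 2"
  shows "(\<forall>k::nat. 2 \<le> k \<and> k \<le> n \<longrightarrow>
            (\<forall>x::real. 0 \<le> x \<and> x \<le> kraw_smallest_root (n - 1) (k - 1) \<longrightarrow>
               krawtchouk n k x \<ge> krawtchouk n k (x + 1)))
       \<and> (\<forall>k x :: nat. k \<le> n \<and> x \<le> n \<longrightarrow>
            \<bar>krawtchouk n k (real x)\<bar> <
              2 powr (real n / 2 * (1 + binary_entropy (real k / real n)
                 - binary_entropy (real x / real n) + 1 / real n * log 2 (real n + 1))))"
proof (intro conjI allI impI)
  fix k :: nat and x :: real
  assume "2 \<le> k \<and> k \<le> n" "0 \<le> x \<and> x \<le> kraw_smallest_root (n - 1) (k - 1)"
  then show "krawtchouk n k (x + 1) \<le> krawtchouk n k x"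
    by (intro krawtchouk_decreasing_below_smallest_root) auto
next
  fix k x :: nat
  assume "k \<le> n \<and> x \<le> n"
  then show "\<bar>krawtchouk n k (real x)\<bar> <
    2 powr (real n / 2 * (1 + binary_entropy (real k / real n)
      - binary_entropy (real x / real n) + 1 / real n * log 2 (real n + 1)))"
    using assms by (intro krawtchouk_entropy_bound) auto
qed

end
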